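(* Let $n,k$ be integers with $1 \leq k \leq n$, let $q$ be a prime power with $q > \binom{n-1}{k-1}$, and let $\mathbf{M}=(m_{i,j})$ be a $k \times n$ binary matrix in which every row has Hamming weight $n-k+1$. Then $\mathbf{M}$ is the support matrix of a generator matrix of some $[n,k]_q$ MDS code if and only if $f(\mathbf{V}_{\mathbf{M}}) \not\equiv 0$ (as a polynomial over $\mathbb{F}_q$).
   Context: For $\mathbf{G}=(g_{i,j}) \in \mathbb{F}_q^{k\times n}$, the support matrix of $\mathbf{G}$ is the $k\times n$ binary matrix with $(i,j)$ entry $0$ if $g_{i,j}=0$ and $1$ if $g_{i,j}\neq 0$. For a $k\times n$ binary matrix $\mathbf{M}=(m_{i,j})$, $\mathbf{V}_{\mathbf{M}}=(v_{i,j})$ is the matrix with $v_{i,j}=0$ if $m_{i,j}=0$ and $v_{i,j}=\xi_{i,j}$ if $m_{i,j}=1$, where the $\xi_{i,j}$ are distinct indeterminates. For any $k\times n$ matrix $\mathbf{N}$, $f(\mathbf{N})=\prod_{\mathbf{P}}\det(\mathbf{P})$, the product over all $\binom{n}{k}$ square submatrices $\mathbf{P}$ of order $k$ of $\mathbf{N}$ (obtained by choosing $k$ of the $n$ columns). An $[n,k]_q$ MDS code is a linear code of length $n$ and dimension $k$ over $\mathbb{F}_q$ with minimum distance $n-k+1$. *)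

theory Defs
  imports "Jordan_Normal_Form.Determinant" "Jordan_Normal_Form.DL_Submatrix" "HOL-Library.Poly_Mapping"
begin

text \<open>Multivariate polynomials over 'a in indeterminates indexed by pairs (i,j).\<close>
type_synonym 'a mpoly = "((nat \<times> nat) \<Rightarrow>\<^sub>0 nat) \<Rightarrow>\<^sub>0 'a"

definition Var :: "nat \<times> nat \<Rightarrow> 'a::comm_ring_1 mpoly" where
  "Var ij = Poly_Mapping.single (Poly_Mapping.single ij 1) 1"

definition support_mat :: "'a::zero mat \<Rightarrow> nat mat" where
  "support_mat G = mat (dim_row G) (dim_col G) (\<lambda>ij. if G $$ ij = 0 then 0 else 1)"

definition V_mat :: "nat mat \<Rightarrow> 'a::comm_ring_1 mpoly mat" where
  "V_mat M = mat (dim_row M) (dim_col M) (\<lambda>ij. if M $$ ij = 0 then 0 else Var ij)"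

definition f_prod :: "'a::comm_ring_1 mat \<Rightarrow> 'a" where
  "f_prod N = (\<Prod>S\<in>{S. S \<subseteq> {..<dim_col N} \<and> card S = dim_row N}. det (submatrix N UNIV S))"

definition code_of :: "'a::field mat \<Rightarrow> 'a vec set" where
  "code_of G = {transpose_mat G *\<^sub>v x | x. x \<in> carrier_vec (dim_row G)}"

definition hamming_wt :: "'a::zero vec \<Rightarrow> nat" where
  "hamming_wt c = card {j. j < dim_vec c \<and> c $ j \<noteq> 0}"

definition min_dist :: "nat \<Rightarrow> 'a::zero vec set \<Rightarrow> nat" where
  "min_dist n C = Min (hamming_wt ` (C - {0\<^sub>v n}))"

text \<open>G is a generator matrix of an [n,k] MDS code: G is k x n, its rows are linearly
  independent (so the code has dimension k), and the minimum distance is n-k+1.\<close>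
definition mds_generator :: "nat \<Rightarrow> nat \<Rightarrow> 'a::field mat \<Rightarrow> bool" where
  "mds_generator n k G \<longleftrightarrow> G \<in> carrier_mat k n
     \<and> inj_on (\<lambda>x. transpose_mat G *\<^sub>v x) (carrier_vec k)
     \<and> min_dist n (code_of G) = n - k + 1"

end

theory Submission
  imports Defs
begin

text \<open>Evaluating \<open>f(V\<^sub>M)\<close> at the entries of a generator matrix \<open>G\<close> with support \<open>M\<close> gives the
  product of the maximal minors of \<open>G\<close>, which are nonzero exactly when \<open>G\<close> generates an MDS code.
  Conversely, if \<open>f(V\<^sub>M) \<noteq> 0\<close> then every maximal minor of \<open>V\<^sub>M\<close> contains a nonzero term of its
  Leibniz expansion, so each minor is nonzero at some point. The indeterminates are then fixed one
  at a time to nonzero values while keeping every minor realizable. A minor is affine in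
  \<open>\<xi>\<^sub>i\<^sub>j\<close>, so at most one nonzero value of \<open>\<xi>\<^sub>i\<^sub>j\<close> kills it, and only if it uses column
  \<open>j\<close>; the minor on column \<open>j\<close> together with the \<open>k - 1\<close> zero columns of row \<open>i\<close> is a multiple of
  \<open>\<xi>\<^sub>i\<^sub>j\<close> and cannot be killed. At most \<open>C(n-1,k-1) - 1 < q - 1\<close> values are thus excluded.\<close>

section \<open>Evaluation of polynomials\<close>

definition monom_eval :: "('v \<Rightarrow> 'a::comm_ring_1) \<Rightarrow> ('v \<Rightarrow>\<^sub>0 nat) \<Rightarrow> 'a" where
  "monom_eval x m = (\<Prod>v\<in>Poly_Mapping.keys m. x v ^ Poly_Mapping.lookup m v)"

definition mpoly_eval :: "('v \<Rightarrow> 'a::comm_ring_1) \<Rightarrow> (('v \<Rightarrow>\<^sub>0 nat) \<Rightarrow>\<^sub>0 'a) \<Rightarrow> 'a" where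
  "mpoly_eval x p = (\<Sum>m\<in>Poly_Mapping.keys p. Poly_Mapping.lookup p m * monom_eval x m)"

lemma monom_eval_superset:
  assumes "finite A" "Poly_Mapping.keys m \<subseteq> A"
  shows "monom_eval x m = (\<Prod>v\<in>A. x v ^ Poly_Mapping.lookup m v)"
  unfolding monom_eval_def
  by (rule prod.mono_neutral_left[OF assms]) (auto simp: in_keys_iff)

lemma monom_eval_zero [simp]: "monom_eval x 0 = 1"
  by (simp add: monom_eval_def)

lemma monom_eval_add: "monom_eval x (a + b) = monom_eval x a * monom_eval x b"
proof -
  let ?A = "Poly_Mapping.keys a \<union> Poly_Mapping.keys b"
  have fin: "finite ?A" by simp
  have "monom_eval x (a + b) = (\<Prod>v\<in>?A. x v ^ Poly_Mapping.lookup (a + b) v)"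
    by (rule monom_eval_superset[OF fin]) (use keys_add[of a b] in auto)
  also have "\<dots> = (\<Prod>v\<in>?A. x v ^ Poly_Mapping.lookup a v) * (\<Prod>v\<in>?A. x v ^ Poly_Mapping.lookup b v)"
    by (simp add: lookup_add power_add prod.distrib)
  also have "\<dots> = monom_eval x a * monom_eval x b"
    by (simp add: monom_eval_superset[OF fin])
  finally show ?thesis .
qed

lemma mpoly_eval_superset:
  assumes "finite A" "Poly_Mapping.keys p \<subseteq> A"
  shows "mpoly_eval x p = (\<Sum>m\<in>A. Poly_Mapping.lookup p m * monom_eval x m)"
  unfolding mpoly_eval_def
  by (rule sum.mono_neutral_left[OF assms]) (auto simp: in_keys_iff)

lemma mpoly_eval_zero [simp]: "mpoly_eval x 0 = 0"
  by (simp add: mpoly_eval_def)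

lemma mpoly_eval_single: "mpoly_eval x (Poly_Mapping.single m c) = c * monom_eval x m"
  by (simp add: mpoly_eval_def)

lemma mpoly_eval_add: "mpoly_eval x (p + q) = mpoly_eval x p + mpoly_eval x q"
proof -
  let ?A = "Poly_Mapping.keys p \<union> Poly_Mapping.keys q"
  have fin: "finite ?A" by simp
  have "mpoly_eval x (p + q) = (\<Sum>m\<in>?A. Poly_Mapping.lookup (p + q) m * monom_eval x m)"
    by (rule mpoly_eval_superset[OF fin]) (use keys_add[of p q] in auto)
  also have "\<dots> = (\<Sum>m\<in>?A. Poly_Mapping.lookup p m * monom_eval x m)
                 + (\<Sum>m\<in>?A. Poly_Mapping.lookup q m * monom_eval x m)"
    by (simp add: lookup_add distrib_right sum.distrib)
  also have "\<dots> = mpoly_eval x p + mpoly_eval x q"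
    by (simp add: mpoly_eval_superset[OF fin])
  finally show ?thesis .
qed

lemma update_eq_add_single:
  assumes "a \<notin> Poly_Mapping.keys f"
  shows "Poly_Mapping.update a b f = f + Poly_Mapping.single a b"
  using assms
  by (intro poly_mapping_eqI) (auto simp: lookup_update lookup_add lookup_single in_keys_iff when_def)

lemma mpoly_eval_single_mult:
  "mpoly_eval x (Poly_Mapping.single m c * q) = c * monom_eval x m * mpoly_eval x q"
proof (induction q rule: update_induct)
  case (update f a b)
  have "Poly_Mapping.single m c * Poly_Mapping.update a b f
        = Poly_Mapping.single m c * f + Poly_Mapping.single (m + a) (c * b)"
    by (simp add: update_eq_add_single[OF update(1)] distrib_left mult_single)
  then have "mpoly_eval x (Poly_Mapping.single m c * Poly_Mapping.update a b f)
             = c * monom_eval x m * mpoly_eval x f + c * b * monom_eval x (m + a)"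
    by (simp add: mpoly_eval_add mpoly_eval_single update(3))
  also have "\<dots> = c * monom_eval x m * mpoly_eval x (Poly_Mapping.update a b f)"
    by (simp add: update_eq_add_single[OF update(1)] mpoly_eval_add mpoly_eval_single
        monom_eval_add algebra_simps)
  finally show ?case .
qed simp

lemma mpoly_eval_mult: "mpoly_eval x (p * q) = mpoly_eval x p * mpoly_eval x q"
proof (induction p rule: update_induct)
  case (update f a b)
  have "Poly_Mapping.update a b f * q = f * q + Poly_Mapping.single a b * q"
    by (simp add: update_eq_add_single[OF update(1)] distrib_right)
  then have "mpoly_eval x (Poly_Mapping.update a b f * q)
             = mpoly_eval x f * mpoly_eval x q + b * monom_eval x a * mpoly_eval x q"
    by (simp add: mpoly_eval_add mpoly_eval_single_mult update(3))
  also have "\<dots> = mpoly_eval x (Poly_Mapping.update a b f) * mpoly_eval x q"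
    by (simp add: update_eq_add_single[OF update(1)] mpoly_eval_add mpoly_eval_single algebra_simps)
  finally show ?case .
qed simp

lemma mpoly_eval_one: "mpoly_eval x 1 = 1"
  by (metis mpoly_eval_single monom_eval_zero mult_1 single_one)

interpretation mpoly_eval_hom: comm_ring_hom "mpoly_eval x"
  by unfold_locales (simp_all add: mpoly_eval_add mpoly_eval_mult mpoly_eval_one)

lemma mpoly_eval_Var: "mpoly_eval x (Var ij) = x ij"
  by (simp add: Var_def mpoly_eval_single monom_eval_def)

definition col_subsets :: "nat \<Rightarrow> nat \<Rightarrow> nat set set" where
  "col_subsets n k = {S. S \<subseteq> {..<n} \<and> card S = k}"

definition maximal_minor :: "'a::comm_ring_1 mat \<Rightarrow> nat set \<Rightarrow> 'a" where
  "maximal_minor A S = det (submatrix A UNIV S)"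

lemma finite_col_subsets: "finite (col_subsets n k)"
  unfolding col_subsets_def by (rule finite_subset[of _ "Pow {..<n}"]) auto

lemma bij_betw_pick:
  assumes "finite S"
  shows "bij_betw (pick S) {..<card S} S"
proof (rule bij_betw_imageI)
  have "strict_mono_on {..<card S} (pick S)"
    by (rule strict_mono_onI) (simp add: pick_mono)
  then show "inj_on (pick S) {..<card S}"
    by (rule strict_mono_on_imp_inj_on)
  show "pick S ` {..<card S} = S"
  proof
    show "pick S ` {..<card S} \<subseteq> S" by (auto intro: pick_in_set)
    show "S \<subseteq> pick S ` {..<card S}"
    proof
      fix j assume "j \<in> S"
      then have "card {a\<in>S. a < j} < card S"
        using assms by (intro psubset_card_mono) auto
      then show "j \<in> pick S ` {..<card S}"
        using pick_card_in_set[OF \<open>j \<in> S\<close>] by force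
    qed
  qed
qed

lemma submatrix_UNIV_cols:
  assumes "A \<in> carrier_mat k n" "S \<subseteq> {..<n}"
  shows "submatrix A UNIV S = mat k (card S) (\<lambda>(i, l). A $$ (i, pick S l))"
proof -
  have "{i. i < dim_row A \<and> i \<in> UNIV} = {..<k}" "{j. j < dim_col A \<and> j \<in> S} = S"
    using assms by auto
  then show ?thesis
    unfolding submatrix_def by (simp add: pick_UNIV)
qed

lemma f_prod_eq_prod_maximal_minors:
  "A \<in> carrier_mat k n \<Longrightarrow> f_prod A = (\<Prod>S\<in>col_subsets n k. maximal_minor A S)"
  unfolding f_prod_def col_subsets_def maximal_minor_def by simp

lemma (in comm_ring_hom) hom_maximal_minor:
  assumes "S \<subseteq> {..<dim_col A}"
  shows "hom (maximal_minor A S) = maximal_minor (map_mat hom A) S"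
proof -
  have A: "A \<in> carrier_mat (dim_row A) (dim_col A)" by simp
  have A': "map_mat hom A \<in> carrier_mat (dim_row A) (dim_col A)" by simp
  have pick: "pick S l < dim_col A" if "l < card S" for l
    using assms pick_in_set[OF disjI1, OF that] by auto
  have map_sub: "map_mat hom (submatrix A UNIV S) = submatrix (map_mat hom A) UNIV S"
    unfolding submatrix_UNIV_cols[OF A assms]
      submatrix_UNIV_cols[OF A' assms]
    by (rule eq_matI) (simp_all add: pick)
  show ?thesis
    unfolding maximal_minor_def map_sub[symmetric] by simp
qed

lemma (in comm_ring_hom) hom_f_prod: "hom (f_prod A) = f_prod (map_mat hom A)"
proof -
  have A: "A \<in> carrier_mat (dim_row A) (dim_col A)" by simp
  have "hom (f_prod A) = (\<Prod>S\<in>col_subsets (dim_col A) (dim_row A). hom (maximal_minor A S))"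
    unfolding f_prod_eq_prod_maximal_minors[OF A] by (rule hom_prod)
  also have "\<dots> = f_prod (map_mat hom A)"
    unfolding f_prod_eq_prod_maximal_minors[OF map_carrier_mat[THEN iffD2, OF A]]
    by (rule prod.cong) (simp_all add: hom_maximal_minor col_subsets_def)
  finally show ?thesis .
qed

section \<open>Specializations of a support pattern\<close>

definition specialize :: "nat mat \<Rightarrow> (nat \<times> nat \<Rightarrow> 'a) \<Rightarrow> 'a::zero mat" where
  "specialize M y = mat (dim_row M) (dim_col M) (\<lambda>ij. if M $$ ij = 0 then 0 else y ij)"

lemma specialize_carrier [simp]: "M \<in> carrier_mat k n \<Longrightarrow> specialize M y \<in> carrier_mat k n"
  by (simp add: specialize_def)

lemma V_mat_eq_specialize: "V_mat M = specialize M Var"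
  by (simp add: V_mat_def specialize_def)

lemma V_mat_carrier: "M \<in> carrier_mat k n \<Longrightarrow> V_mat M \<in> carrier_mat k n"
  by (simp add: V_mat_eq_specialize)

lemma (in comm_ring_hom) map_mat_specialize:
  "map_mat hom (specialize M y) = specialize M (hom \<circ> y)"
  by (rule eq_matI) (auto simp: specialize_def)

lemma specialize_support_mat: "specialize (support_mat G) (($$) G) = G"
  by (rule eq_matI) (auto simp: specialize_def support_mat_def)

lemma support_mat_specialize:
  assumes "\<And>i j. i < dim_row M \<Longrightarrow> j < dim_col M \<Longrightarrow> M $$ (i, j) \<in> {0, 1}"
    and "\<And>i j. i < dim_row M \<Longrightarrow> j < dim_col M \<Longrightarrow> M $$ (i, j) \<noteq> 0 \<Longrightarrow> c (i, j) \<noteq> 0"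
  shows "support_mat (specialize M c) = M"
  by (rule eq_matI) (use assms in \<open>fastforce simp: specialize_def support_mat_def\<close>)+

section \<open>Codes whose maximal minors are nonzero\<close>

lemma finite_carrier_vec: "finite (carrier_vec n :: 'a::finite vec set)"
proof (rule finite_subset)
  show "carrier_vec n \<subseteq> vec_of_list ` {xs :: 'a list. set xs \<subseteq> UNIV \<and> length xs = n}"
  proof
    fix v :: "'a vec"
    assume "v \<in> carrier_vec n"
    then show "v \<in> vec_of_list ` {xs. set xs \<subseteq> UNIV \<and> length xs = n}"
      by (intro image_eqI[of _ _ "list_of_vec v"]) (auto simp: vec_list)
  qed
  show "finite (vec_of_list ` {xs :: 'a list. set xs \<subseteq> UNIV \<and> length xs = n})"
    by (rule finite_imageI, rule finite_lists_length_eq) simp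
qed

lemma finite_code_of: "finite (code_of (G :: 'a::{field,finite} mat))"
proof -
  have "code_of G = (\<lambda>x. transpose_mat G *\<^sub>v x) ` carrier_vec (dim_row G)"
    unfolding code_of_def by auto
  then show ?thesis
    by (simp add: finite_imageI[OF finite_carrier_vec])
qed

lemma mult_mat_vec_zero: "A \<in> carrier_mat nr nc \<Longrightarrow> A *\<^sub>v 0\<^sub>v nc = 0\<^sub>v nr"
  by (intro eq_vecI) (auto simp: row_def)

lemma hamming_wt_zero [simp]: "hamming_wt (0\<^sub>v n) = 0"
proof -
  have "{j. j < n \<and> 0\<^sub>v n $ j \<noteq> 0} = {}" by auto
  then show ?thesis by (simp add: hamming_wt_def)
qed

lemma transpose_submatrix_mult_vec:
  assumes "G \<in> carrier_mat k n" "S \<subseteq> {..<n}" "z \<in> carrier_vec k" "l < card S"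
  shows "(transpose_mat (submatrix G UNIV S) *\<^sub>v z) $ l = (transpose_mat G *\<^sub>v z) $ pick S l"
proof -
  have "pick S l < n"
    using assms(2) pick_in_set[OF disjI1, OF assms(4)] by auto
  then show ?thesis
    using assms unfolding submatrix_UNIV_cols[OF assms(1,2)] by (simp add: scalar_prod_def col_def)
qed

lemma transpose_submatrix_mult_vec_eq_zero_iff:
  assumes G: "G \<in> carrier_mat k n" and S: "S \<in> col_subsets n k" and z: "z \<in> carrier_vec k"
  shows "transpose_mat (submatrix G UNIV S) *\<^sub>v z = 0\<^sub>v k
         \<longleftrightarrow> (\<forall>j\<in>S. (transpose_mat G *\<^sub>v z) $ j = 0)"
proof -
  have S': "S \<subseteq> {..<n}" "card S = k" "finite S"
    using S by (auto simp: col_subsets_def intro: finite_subset)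
  have "transpose_mat (submatrix G UNIV S) *\<^sub>v z = 0\<^sub>v k
        \<longleftrightarrow> (\<forall>l<k. (transpose_mat G *\<^sub>v z) $ pick S l = 0)"
    using transpose_submatrix_mult_vec[OF G S'(1) z] submatrix_UNIV_cols[OF G S'(1)] S'(2)
    by (auto simp: vec_eq_iff)
  also have "\<dots> \<longleftrightarrow> (\<forall>j\<in>S. (transpose_mat G *\<^sub>v z) $ j = 0)"
  proof -
    have "pick S ` {..<k} = S"
      using bij_betw_imp_surj_on[OF bij_betw_pick[OF S'(3)]] S'(2) by simp
    then show ?thesis
      by (metis (no_types, lifting) image_eqI imageE lessThan_iff)
  qed
  finally show ?thesis .
qed

lemma maximal_minor_nonzero_iff:
  fixes G :: "'a::field mat"
  assumes G: "G \<in> carrier_mat k n" and S: "S \<in> col_subsets n k"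
  shows "maximal_minor G S \<noteq> 0 \<longleftrightarrow>
    (\<forall>z\<in>carrier_vec k. (\<forall>j\<in>S. (transpose_mat G *\<^sub>v z) $ j = 0) \<longrightarrow> z = 0\<^sub>v k)"
proof -
  have sub: "submatrix G UNIV S \<in> carrier_mat k k"
    using S submatrix_UNIV_cols[OF G] by (auto simp: col_subsets_def)
  have "maximal_minor G S = det (transpose_mat (submatrix G UNIV S))"
    unfolding maximal_minor_def by (rule det_transpose[OF sub, symmetric])
  then show ?thesis
    using det_0_iff_vec_prod_zero_field[of "transpose_mat (submatrix G UNIV S)" k] sub
      transpose_submatrix_mult_vec_eq_zero_iff[OF G S] by auto
qed

lemma hamming_wt_le_iff_vanishes:
  assumes c: "dim_vec c = n" and "k \<le> n"
  shows "hamming_wt c \<le> n - k \<longleftrightarrow> (\<exists>S\<in>col_subsets n k. \<forall>j\<in>S. c $ j = 0)"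
proof -
  define Z where "Z = {j. j < n \<and> c $ j = 0}"
  have Z: "Z \<subseteq> {..<n}" "finite Z"
    unfolding Z_def by auto
  have "hamming_wt c = card ({..<n} - Z)"
    unfolding hamming_wt_def Z_def c by (rule arg_cong[of _ _ card]) auto
  also have "\<dots> = n - card Z"
    using Z by (simp add: card_Diff_subset)
  finally have wt: "hamming_wt c = n - card Z" .
  have "card Z \<le> n"
    using card_mono[OF _ Z(1)] by simp
  then have "hamming_wt c \<le> n - k \<longleftrightarrow> k \<le> card Z"
    using wt assms(2) by linarith
  also have "\<dots> \<longleftrightarrow> (\<exists>S. S \<subseteq> Z \<and> card S = k)"
    using Z(2) by (meson card_mono obtain_subset_with_card_n)
  also have "\<dots> \<longleftrightarrow> (\<exists>S\<in>col_subsets n k. \<forall>j\<in>S. c $ j = 0)"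
    unfolding col_subsets_def Z_def by auto
  finally show ?thesis .
qed

lemma maximal_minors_nonzero_iff:
  fixes G :: "'a::field mat"
  assumes G: "G \<in> carrier_mat k n" and "k \<le> n"
  shows "(\<forall>S\<in>col_subsets n k. maximal_minor G S \<noteq> 0) \<longleftrightarrow>
    (\<forall>z\<in>carrier_vec k. hamming_wt (transpose_mat G *\<^sub>v z) \<le> n - k \<longrightarrow> z = 0\<^sub>v k)"
proof -
  have "hamming_wt (transpose_mat G *\<^sub>v z) \<le> n - k
        \<longleftrightarrow> (\<exists>S\<in>col_subsets n k. \<forall>j\<in>S. (transpose_mat G *\<^sub>v z) $ j = 0)" for z
    by (rule hamming_wt_le_iff_vanishes) (use G assms(2) in simp_all)
  then show ?thesis
    using maximal_minor_nonzero_iff[OF G] by blast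
qed

lemma mds_generator_imp_maximal_minors_nonzero:
  fixes G :: "'a::{field,finite} mat"
  assumes mds: "mds_generator n k G" and "k \<le> n"
  shows "\<forall>S\<in>col_subsets n k. maximal_minor G S \<noteq> 0"
proof -
  have G: "G \<in> carrier_mat k n"
    and inj: "inj_on (\<lambda>x. transpose_mat G *\<^sub>v x) (carrier_vec k)"
    and dist: "min_dist n (code_of G) = n - k + 1"
    using mds unfolding mds_generator_def by auto
  have "z = 0\<^sub>v k" if z: "z \<in> carrier_vec k"
    and wt: "hamming_wt (transpose_mat G *\<^sub>v z) \<le> n - k" for z
  proof (rule ccontr)
    assume "z \<noteq> 0\<^sub>v k"
    moreover have "transpose_mat G *\<^sub>v 0\<^sub>v k = 0\<^sub>v n"
      by (rule mult_mat_vec_zero) (use G in simp)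
    ultimately have "transpose_mat G *\<^sub>v z \<noteq> 0\<^sub>v n"
      using inj_onD[OF inj _ z zero_carrier_vec] by auto
    then have "transpose_mat G *\<^sub>v z \<in> code_of G - {0\<^sub>v n}"
      using G z by (auto simp: code_of_def)
    then have "min_dist n (code_of G) \<le> hamming_wt (transpose_mat G *\<^sub>v z)"
      unfolding min_dist_def using finite_code_of[of G] by (intro Min_le) auto
    then show False
      using dist wt by simp
  qed
  then show ?thesis
    using maximal_minors_nonzero_iff[OF G assms(2)] by blast
qed

lemma maximal_minors_nonzero_imp_mds_generator:
  fixes G :: "'a::{field,finite} mat"
  assumes G: "G \<in> carrier_mat k n" and "k \<le> n"
    and minors: "\<forall>S\<in>col_subsets n k. maximal_minor G S \<noteq> 0"
    and i: "i < k" and row_wt: "hamming_wt (row G i) = n - k + 1"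
  shows "mds_generator n k G"
proof -
  have low_wt: "z = 0\<^sub>v k"
    if "z \<in> carrier_vec k" "hamming_wt (transpose_mat G *\<^sub>v z) \<le> n - k" for z
    using maximal_minors_nonzero_iff[OF G assms(2)] minors that by blast
  have inj: "inj_on (\<lambda>x. transpose_mat G *\<^sub>v x) (carrier_vec k)"
  proof (rule inj_onI)
    fix x y :: "'a vec"
    assume x: "x \<in> carrier_vec k" and y: "y \<in> carrier_vec k"
      and eq: "transpose_mat G *\<^sub>v x = transpose_mat G *\<^sub>v y"
    have "transpose_mat G *\<^sub>v (x - y) = 0\<^sub>v n"
      using G x y eq by (simp add: mult_minus_distrib_mat_vec[of _ n k])
    then have "x - y = 0\<^sub>v k"
      using low_wt[of "x - y"] x y by simp
    then show "x = y"
      using x y by (auto simp: vec_eq_iff dest: arg_cong[of _ _ "\<lambda>v. v $ _"])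
  qed
  have row_code: "row G i \<in> code_of G - {0\<^sub>v n}"
  proof -
    have "transpose_mat G *\<^sub>v unit_vec k i = row G i"
      using G i by (intro eq_vecI) auto
    moreover have "row G i \<noteq> 0\<^sub>v n"
      using row_wt by auto
    ultimately show ?thesis
      using G i unfolding code_of_def by (auto intro!: exI[of _ "unit_vec k i"])
  qed
  have heavy: "n - k + 1 \<le> hamming_wt c" if c_code: "c \<in> code_of G - {0\<^sub>v n}" for c
  proof -
    have "dim_row G = k"
      using G by simp
    then obtain z where z: "z \<in> carrier_vec k" and c: "c = transpose_mat G *\<^sub>v z"
      using c_code unfolding code_of_def by blast
    have "transpose_mat G *\<^sub>v 0\<^sub>v k = 0\<^sub>v n"
      by (rule mult_mat_vec_zero) (use G in simp)
    then have "z \<noteq> 0\<^sub>v k"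
      using c_code c by auto
    then show ?thesis
      using low_wt[OF z] c by fastforce
  qed
  have "min_dist n (code_of G) = n - k + 1"
    unfolding min_dist_def
  proof (rule Min_eqI)
    show "n - k + 1 \<in> hamming_wt ` (code_of G - {0\<^sub>v n})"
      using row_code row_wt by (metis image_eqI)
  qed (use finite_code_of[of G] heavy in auto)
  then show ?thesis
    unfolding mds_generator_def using G inj by simp
qed

lemma det_affine_row:
  fixes A B C :: "'a::comm_ring_1 mat"
  assumes carrier: "A \<in> carrier_mat k k" "B \<in> carrier_mat k k" "C \<in> carrier_mat k k"
    and i0: "i0 < k"
    and other_rows: "\<And>i l. i < k \<Longrightarrow> l < k \<Longrightarrow> i \<noteq> i0 \<Longrightarrow>
      B $$ (i, l) = A $$ (i, l) \<and> C $$ (i, l) = A $$ (i, l)"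
    and row_i0: "\<And>l. l < k \<Longrightarrow> A $$ (i0, l) = t * B $$ (i0, l) + (1 - t) * C $$ (i0, l)"
  shows "det A = t * det B + (1 - t) * det C"
proof -
  have summand: "(\<Prod>i=0..<k. A $$ (i, p i))
      = t * (\<Prod>i=0..<k. B $$ (i, p i)) + (1 - t) * (\<Prod>i=0..<k. C $$ (i, p i))"
    if p: "p permutes {0..<k}" for p
  proof -
    have p_lt: "p i < k" if "i < k" for i
      using permutes_in_image[OF p] that by simp
    have split: "(\<Prod>i=0..<k. X $$ (i, p i)) = X $$ (i0, p i0) * (\<Prod>i\<in>{0..<k}-{i0}. X $$ (i, p i))"
      for X :: "'a mat"
      by (rule prod.remove) (use i0 in auto)
    have "(\<Prod>i\<in>{0..<k}-{i0}. B $$ (i, p i)) = (\<Prod>i\<in>{0..<k}-{i0}. A $$ (i, p i))"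
      "(\<Prod>i\<in>{0..<k}-{i0}. C $$ (i, p i)) = (\<Prod>i\<in>{0..<k}-{i0}. A $$ (i, p i))"
      using other_rows p_lt by (auto intro!: prod.cong)
    then show ?thesis
      unfolding split row_i0[OF p_lt[OF i0]] by (simp add: algebra_simps)
  qed
  show ?thesis
    unfolding det_def'[OF carrier(1)] det_def'[OF carrier(2)] det_def'[OF carrier(3)]
      sum_distrib_left sum.distrib[symmetric]
    by (rule sum.cong) (simp_all add: summand algebra_simps)
qed

lemma det_permutation_mat:
  assumes p: "p permutes {0..<k}"
  shows "det (mat k k (\<lambda>(i, l). if l = p i then 1 else 0) :: 'a::comm_ring_1 mat) = signof p"
proof -
  let ?term = "\<lambda>q. signof q * (\<Prod>i=0..<k. if q i = p i then 1 else 0 :: 'a)"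
  have "det (mat k k (\<lambda>(i, l). if l = p i then 1 else 0) :: 'a mat)
        = (\<Sum>q\<in>{q. q permutes {0..<k}}. ?term q)"
    by (subst det_def') (auto intro!: sum.cong prod.cong dest: permutes_in_image)
  also have "\<dots> = ?term p"
  proof (rule sum.remove[THEN trans])
    show "?term p + (\<Sum>q\<in>{q. q permutes {0..<k}} - {p}. ?term q) = ?term p"
    proof -
      have "?term q = 0" if q: "q permutes {0..<k}" "q \<noteq> p" for q
      proof -
        obtain i where "q i \<noteq> p i"
          using q(2) by blast
        then have "i < k"
          using permutes_not_in[OF q(1)] permutes_not_in[OF p] by fastforce
        then have "(\<Prod>i=0..<k. if q i = p i then 1 else 0 :: 'a) = 0"
          using \<open>q i \<noteq> p i\<close> by (intro prod_zero bexI[of _ i]) auto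
        then show ?thesis by simp
      qed
      then show ?thesis by simp
    qed
  qed (use p finite_permutations in auto)
  finally show ?thesis by simp
qed

lemma det_nonzero_imp_transversal:
  assumes A: "A \<in> carrier_mat k k" and "det A \<noteq> 0"
  obtains p where "p permutes {0..<k}" "\<And>i. i < k \<Longrightarrow> A $$ (i, p i) \<noteq> 0"
proof -
  obtain p where p: "p permutes {0..<k}" and nz: "signof p * (\<Prod>i=0..<k. A $$ (i, p i)) \<noteq> 0"
    using assms(2) unfolding det_def'[OF A] by (blast elim: sum.not_neutral_contains_not_neutral)
  have "A $$ (i, p i) \<noteq> 0" if "i < k" for i
  proof
    assume "A $$ (i, p i) = 0"
    then have "(\<Prod>i=0..<k. A $$ (i, p i)) = 0"
      using that by (intro prod_zero bexI[of _ i]) auto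
    with nz show False by simp
  qed
  with p that show thesis by blast
qed

lemma pick_in_col_subset:
  assumes "S \<in> col_subsets n k" "l < k"
  shows "pick S l \<in> S" "pick S l < n"
  using assms pick_in_set[OF disjI1, of l S] by (auto simp: col_subsets_def)

lemma submatrix_specialize:
  assumes M: "M \<in> carrier_mat k n" and S: "S \<in> col_subsets n k"
  shows "submatrix (specialize M y) UNIV S
         = mat k k (\<lambda>(i, l). if M $$ (i, pick S l) = 0 then 0 else y (i, pick S l))"
proof -
  have S': "S \<subseteq> {..<n}" "card S = k"
    using S by (auto simp: col_subsets_def)
  show ?thesis
    unfolding submatrix_UNIV_cols[OF specialize_carrier[OF M] S'(1)] S'(2)
    using M pick_in_col_subset(2)[OF S] by (intro eq_matI) (auto simp: specialize_def)
qed

lemma maximal_minor_specialize_cong: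
  assumes M: "M \<in> carrier_mat k n" and S: "S \<in> col_subsets n k"
    and agree: "\<And>i j. i < k \<Longrightarrow> j \<in> S \<Longrightarrow> M $$ (i, j) \<noteq> 0 \<Longrightarrow> y (i, j) = y' (i, j)"
  shows "maximal_minor (specialize M y) S = maximal_minor (specialize M y') S"
  unfolding maximal_minor_def submatrix_specialize[OF M S]
  using agree pick_in_col_subset(1)[OF S] by (intro arg_cong[of _ _ det] eq_matI) auto

lemma maximal_minor_specialize_affine:
  assumes M: "M \<in> carrier_mat k n" and S: "S \<in> col_subsets n k" and i0: "i0 < k"
  shows "maximal_minor (specialize M (y((i0, j0) := t))) S
         = t * maximal_minor (specialize M (y((i0, j0) := 1))) S
           + (1 - t) * maximal_minor (specialize M (y((i0, j0) := 0))) S"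
  unfolding maximal_minor_def submatrix_specialize[OF M S]
  by (rule det_affine_row[OF _ _ _ i0]) (use i0 in \<open>auto simp: algebra_simps\<close>)

lemma maximal_minor_specialize_zero_row:
  assumes M: "M \<in> carrier_mat k n" and S: "S \<in> col_subsets n k" and i0: "i0 < k"
    and zero_row: "\<And>j. j \<in> S \<Longrightarrow> j \<noteq> j0 \<Longrightarrow> M $$ (i0, j) = 0"
  shows "maximal_minor (specialize M (y((i0, j0) := 0))) S = 0"
  unfolding maximal_minor_def submatrix_specialize[OF M S]
  using zero_row pick_in_col_subset(1)[OF S] i0
  by (subst laplace_expansion_row[OF _ i0]) (auto intro!: sum.neutral)

lemma maximal_minor_specialize_transversal:
  fixes M :: "nat mat"
  assumes M: "M \<in> carrier_mat k n" and S: "S \<in> col_subsets n k"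
    and "maximal_minor (V_mat M :: 'b::comm_ring_1 mpoly mat) S \<noteq> 0"
  shows "\<exists>y :: nat \<times> nat \<Rightarrow> 'a::comm_ring_1. maximal_minor (specialize M y) S \<noteq> 0"
proof -
  have "submatrix (V_mat M :: 'b mpoly mat) UNIV S \<in> carrier_mat k k"
    unfolding V_mat_eq_specialize submatrix_specialize[OF M S] by simp
  then obtain p where p: "p permutes {0..<k}"
    and V_nonzero: "\<And>i. i < k \<Longrightarrow> submatrix (V_mat M :: 'b mpoly mat) UNIV S $$ (i, p i) \<noteq> 0"
    using det_nonzero_imp_transversal assms(3) unfolding maximal_minor_def by blast
  have M_nonzero: "M $$ (i, pick S (p i)) \<noteq> 0" if "i < k" for i
  proof -
    have "p i < k"
      using permutes_in_image[OF p] that by simp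
    then show ?thesis
      using V_nonzero[OF that] that
      unfolding V_mat_eq_specialize submatrix_specialize[OF M S] by (auto split: if_splits)
  qed
  have inj: "inj_on (pick S) {..<k}"
    using bij_betw_pick[of S] S by (auto simp: col_subsets_def bij_betw_def intro: finite_subset)
  define y where "y = (\<lambda>(i, j). if j = pick S (p i) then 1 else 0 :: 'a)"
  have "submatrix (specialize M y) UNIV S = mat k k (\<lambda>(i, l). if l = p i then 1 else 0)"
    unfolding submatrix_specialize[OF M S] y_def
    using M_nonzero permutes_in_image[OF p] inj_onD[OF inj] by (intro eq_matI) auto
  then have "maximal_minor (specialize M y) S = signof p"
    unfolding maximal_minor_def by (simp add: det_permutation_mat[OF p])
  then show ?thesis
    by (intro exI[of _ y]) (simp add: sign_def)
qed

lemma card_col_subsets_containing: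
  assumes j0: "j0 < n" and k: "1 \<le> k"
  shows "card {S\<in>col_subsets n k. j0 \<in> S} = (n - 1) choose (k - 1)"
proof -
  let ?T = "{T. T \<subseteq> {..<n} - {j0} \<and> card T = k - 1}"
  have "bij_betw (insert j0) ?T {S\<in>col_subsets n k. j0 \<in> S}"
  proof (rule bij_betw_byWitness[where f' = "\<lambda>S. S - {j0}"])
    show "insert j0 ` ?T \<subseteq> {S\<in>col_subsets n k. j0 \<in> S}"
      using j0 k by (auto simp: col_subsets_def card_insert_if finite_subset)
    show "(\<lambda>S. S - {j0}) ` {S\<in>col_subsets n k. j0 \<in> S} \<subseteq> ?T"
      by (auto simp: col_subsets_def finite_subset)
  qed auto
  then have "card {S\<in>col_subsets n k. j0 \<in> S} = card ?T"
    by (simp add: bij_betw_same_card)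
  also have "\<dots> = (n - 1) choose (k - 1)"
    using j0 by (subst n_subsets) auto
  finally show ?thesis .
qed

section \<open>Choosing nonzero values one indeterminate at a time\<close>

definition depends_on :: "(('v \<Rightarrow> 'a) \<Rightarrow> 'b) \<Rightarrow> 'v \<Rightarrow> bool" where
  "depends_on F v \<longleftrightarrow> (\<exists>y t. F (y(v := t)) \<noteq> F y)"

text \<open>An \<open>F\<close> affine in \<open>v\<close> can be made to vanish by a nonzero value of \<open>v\<close> only if it is
  critical at \<open>v\<close>, and then by at most one value.\<close>

definition critical_at :: "(('v \<Rightarrow> 'a::zero) \<Rightarrow> 'b::zero) \<Rightarrow> 'v \<Rightarrow> bool" where
  "critical_at F v \<longleftrightarrow> depends_on F v \<and> (\<exists>y. F (y(v := 0)) \<noteq> 0)"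

lemma affine_root_unique:
  fixes g :: "'a::field \<Rightarrow> 'a"
  assumes affine: "\<And>t. g t = t * g 1 + (1 - t) * g 0"
    and "g s \<noteq> 0" and "g a = 0" and "g b = 0"
  shows "a = b"
proof (rule ccontr)
  assume "a \<noteq> b"
  have "(a - b) * (g 1 - g 0) = g a - g b"
    by (simp add: affine[of a] affine[of b] algebra_simps)
  then have "g 1 = g 0"
    using \<open>a \<noteq> b\<close> assms(3,4) by simp
  then have "g t = g 0" for t
    using affine[of t] by (simp add: algebra_simps)
  then show False
    using assms(2,3) by metis
qed

lemma card_nonzero_roots_le:
  fixes F :: "('v \<Rightarrow> 'a::{field,finite}) \<Rightarrow> 'a"
  assumes affine: "\<And>y t. F (y(v := t)) = t * F (y(v := 1)) + (1 - t) * F (y(v := 0))"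
    and nonzero: "F y \<noteq> 0"
  shows "card {a. a \<noteq> 0 \<and> F (y(v := a)) = 0} \<le> of_bool (critical_at F v)"
proof -
  let ?R = "{a. a \<noteq> 0 \<and> F (y(v := a)) = 0}"
  have "card ?R \<le> 1"
  proof -
    have "\<forall>a\<in>?R. \<forall>b\<in>?R. a = b"
    proof (intro ballI)
      fix a b assume "a \<in> ?R" "b \<in> ?R"
      then have "F (y(v := a)) = 0" "F (y(v := b)) = 0"
        by simp_all
      moreover have "F (y(v := y v)) \<noteq> 0"
        using nonzero by simp
      ultimately show "a = b"
        using affine_root_unique[where g = "\<lambda>t. F (y(v := t))", OF affine] by blast
    qed
    then show ?thesis
      unfolding One_nat_def by (rule card_le_Suc0_iff_eq[THEN iffD2, OF finite])
  qed
  moreover have "?R = {}" if "\<not> critical_at F v"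
  proof (cases "depends_on F v")
    case False
    then have "F (y(v := a)) = F y" for a
      by (auto simp: depends_on_def)
    then show ?thesis
      using nonzero by auto
  next
    case True
    then have g: "F (y(v := a)) = a * F (y(v := 1))" for a
      using affine[of y a] that by (simp add: critical_at_def)
    have "F (y(v := 1)) \<noteq> 0"
      using g[of "y v"] nonzero by auto
    then have "F (y(v := a)) \<noteq> 0" if "a \<noteq> 0" for a
      using g[of a] that by simp
    then show ?thesis
      by blast
  qed
  ultimately show ?thesis
    by (cases "critical_at F v") auto
qed

lemma exists_nonzero_value_keeping_nonzero:
  fixes D :: "'s \<Rightarrow> ('v \<Rightarrow> 'a::{field,finite}) \<Rightarrow> 'a" and w :: "'s \<Rightarrow> 'v \<Rightarrow> 'a"
  assumes fin: "finite \<S>"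
    and affine: "\<And>S y t. S \<in> \<S> \<Longrightarrow> D S (y(v := t)) = t * D S (y(v := 1)) + (1 - t) * D S (y(v := 0))"
    and nonzero: "\<And>S. S \<in> \<S> \<Longrightarrow> D S (w S) \<noteq> 0"
    and few: "card {S\<in>\<S>. critical_at (D S) v} < card (UNIV :: 'a set) - 1"
  shows "\<exists>a. a \<noteq> 0 \<and> (\<forall>S\<in>\<S>. D S ((w S)(v := a)) \<noteq> 0)"
proof -
  define roots where "roots S = {a. a \<noteq> 0 \<and> D S ((w S)(v := a)) = 0}" for S
  have "card (\<Union>S\<in>\<S>. roots S) \<le> (\<Sum>S\<in>\<S>. card (roots S))"
    using fin by (rule card_UN_le)
  also have "\<dots> \<le> (\<Sum>S\<in>\<S>. of_bool (critical_at (D S) v))"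
  proof (rule sum_mono)
    fix S assume "S \<in> \<S>"
    show "card (roots S) \<le> of_bool (critical_at (D S) v)"
      unfolding roots_def using affine[OF \<open>S \<in> \<S>\<close>] nonzero[OF \<open>S \<in> \<S>\<close>]
      by (rule card_nonzero_roots_le[where F = "D S"])
  qed
  also have "\<dots> < card (UNIV - {0 :: 'a})"
    using fin few by (simp add: card_Diff_singleton Int_def)
  finally have "\<not> UNIV - {0} \<subseteq> (\<Union>S\<in>\<S>. roots S)"
    by (meson card_mono finite leD)
  then show ?thesis
    by (auto simp: roots_def)
qed

lemma exists_nonzero_assignment:
  fixes D :: "'s \<Rightarrow> ('v \<Rightarrow> 'a::{field,finite}) \<Rightarrow> 'a"
  assumes fin: "finite \<S>" "finite P"
    and affine: "\<And>S y v t. S \<in> \<S> \<Longrightarrow> v \<in> P \<Longrightarrow>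
      D S (y(v := t)) = t * D S (y(v := 1)) + (1 - t) * D S (y(v := 0))"
    and nonzero: "\<And>S. S \<in> \<S> \<Longrightarrow> \<exists>y. D S y \<noteq> 0"
    and few: "\<And>v. v \<in> P \<Longrightarrow>
      card {S\<in>\<S>. critical_at (D S) v} < card (UNIV :: 'a set) - 1"
    and local: "\<And>S y y'. S \<in> \<S> \<Longrightarrow> (\<And>v. v \<in> P \<Longrightarrow> y v = y' v) \<Longrightarrow> D S y = D S y'"
  shows "\<exists>c. (\<forall>v\<in>P. c v \<noteq> 0) \<and> (\<forall>S\<in>\<S>. D S c \<noteq> 0)"
proof -
  have "\<exists>c. (\<forall>v\<in>T. c v \<noteq> 0) \<and> (\<forall>S\<in>\<S>. \<exists>y. (\<forall>v\<in>T. y v = c v) \<and> D S y \<noteq> 0)"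
    if "T \<subseteq> P" for T
  proof -
    have "finite T"
      using that fin(2) by (rule finite_subset)
    then show ?thesis
      using that
    proof (induction T rule: finite_induct)
      case empty
      then show ?case
        using nonzero by auto
    next
      case (insert v T)
      then obtain c where c: "\<forall>u\<in>T. c u \<noteq> 0"
        and "\<forall>S\<in>\<S>. \<exists>y. (\<forall>u\<in>T. y u = c u) \<and> D S y \<noteq> 0"
        by auto
      then obtain w where w: "\<forall>S\<in>\<S>. (\<forall>u\<in>T. w S u = c u) \<and> D S (w S) \<noteq> 0"
        using bchoice[of \<S> "\<lambda>S y. (\<forall>u\<in>T. y u = c u) \<and> D S y \<noteq> 0"] by blast
      obtain a where "a \<noteq> 0" and a: "\<forall>S\<in>\<S>. D S ((w S)(v := a)) \<noteq> 0"
        using exists_nonzero_value_keeping_nonzero[of \<S> D v w] fin(1) affine few w insert.prems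
        by blast
      have "\<exists>y. (\<forall>u\<in>insert v T. y u = (c(v := a)) u) \<and> D S y \<noteq> 0" if "S \<in> \<S>" for S
        using w a that insert.hyps(2) by (intro exI[of _ "(w S)(v := a)"]) auto
      then show ?case
        using c \<open>a \<noteq> 0\<close> by (intro exI[of _ "c(v := a)"]) auto
    qed
  qed
  then obtain c where "\<forall>v\<in>P. c v \<noteq> 0" and "\<forall>S\<in>\<S>. \<exists>y. (\<forall>v\<in>P. y v = c v) \<and> D S y \<noteq> 0"
    by blast
  then show ?thesis
    using local by metis
qed

section \<open>Existence of an MDS code with prescribed support\<close>

lemma card_critical_col_subsets:
  fixes M :: "nat mat"
  assumes M: "M \<in> carrier_mat k n" and "1 \<le> k"
    and i0: "i0 < k" and j0: "j0 < n" and "M $$ (i0, j0) \<noteq> 0"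
    and zeros: "card {j. j < n \<and> M $$ (i0, j) = 0} = k - 1"
  shows "card {S\<in>col_subsets n k.
           critical_at (\<lambda>y. maximal_minor (specialize M y) S :: 'a::comm_ring_1) (i0, j0)}
         \<le> ((n - 1) choose (k - 1)) - 1" (is "card ?C \<le> _")
proof -
  define Z where "Z = {j. j < n \<and> M $$ (i0, j) = 0}"
  have "j0 \<notin> Z" "finite Z" "Z \<subseteq> {..<n}"
    using assms(5) unfolding Z_def by auto
  then have S0: "insert j0 Z \<in> {S\<in>col_subsets n k. j0 \<in> S}"
    using j0 zeros \<open>1 \<le> k\<close> by (auto simp: col_subsets_def Z_def)
  have "?C \<subseteq> {S\<in>col_subsets n k. j0 \<in> S} - {insert j0 Z}"
  proof
    fix S assume "S \<in> ?C"
    then have S: "S \<in> col_subsets n k"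
      and dep: "depends_on (\<lambda>y. maximal_minor (specialize M y) S :: 'a) (i0, j0)"
      and nonzero: "\<exists>y. maximal_minor (specialize M (y((i0, j0) := 0))) S \<noteq> (0 :: 'a)"
      by (auto simp: critical_at_def)
    have "j0 \<in> S"
    proof (rule ccontr)
      assume "j0 \<notin> S"
      then have "maximal_minor (specialize M (y((i0, j0) := t))) S = maximal_minor (specialize M y) S"
        for y and t :: 'a
        by (intro maximal_minor_specialize_cong[OF M S]) auto
      then show False
        using dep by (simp add: depends_on_def)
    qed
    moreover have "S \<noteq> insert j0 Z"
    proof
      assume "S = insert j0 Z"
      then have "maximal_minor (specialize M (y((i0, j0) := 0))) S = (0 :: 'a)" for y
        by (intro maximal_minor_specialize_zero_row[OF M S i0]) (auto simp: Z_def)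
      with nonzero show False by blast
    qed
    ultimately show "S \<in> {S\<in>col_subsets n k. j0 \<in> S} - {insert j0 Z}"
      using S by blast
  qed
  then have "card ?C \<le> card ({S\<in>col_subsets n k. j0 \<in> S} - {insert j0 Z})"
    by (rule card_mono[rotated]) (simp add: finite_col_subsets)
  also have "\<dots> = ((n - 1) choose (k - 1)) - 1"
    using S0 card_col_subsets_containing[OF j0 \<open>1 \<le> k\<close>] finite_col_subsets[of n k]
    by (simp add: card_Diff_singleton)
  finally show ?thesis .
qed

lemma exists_specialization_with_nonzero_minors:
  fixes M :: "nat mat"
  assumes k: "1 \<le> k" "k \<le> n" and M: "M \<in> carrier_mat k n"
    and binary: "\<forall>i<k. \<forall>j<n. M $$ (i, j) \<in> {0, 1}"
    and row_wt: "\<forall>i<k. card {j. j < n \<and> M $$ (i, j) = 1} = n - k + 1"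
    and q: "card (UNIV :: 'a::{finite,field} set) > (n - 1) choose (k - 1)"
    and realizable: "\<And>S. S \<in> col_subsets n k \<Longrightarrow> \<exists>y :: nat \<times> nat \<Rightarrow> 'a. maximal_minor (specialize M y) S \<noteq> 0"
  shows "\<exists>c :: nat \<times> nat \<Rightarrow> 'a. (\<forall>i<k. \<forall>j<n. M $$ (i, j) \<noteq> 0 \<longrightarrow> c (i, j) \<noteq> 0)
           \<and> (\<forall>S\<in>col_subsets n k. maximal_minor (specialize M c) S \<noteq> 0)"
proof -
  define P where "P = {(i, j). i < k \<and> j < n \<and> M $$ (i, j) \<noteq> 0}"
  have "\<exists>c :: nat \<times> nat \<Rightarrow> 'a. (\<forall>v\<in>P. c v \<noteq> 0)
          \<and> (\<forall>S\<in>col_subsets n k. maximal_minor (specialize M c) S \<noteq> 0)"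
  proof (rule exists_nonzero_assignment)
    show "finite P"
      unfolding P_def by (rule finite_subset[of _ "{..<k} \<times> {..<n}"]) auto
    show "maximal_minor (specialize M (y(v := t))) S
          = t * maximal_minor (specialize M (y(v := 1))) S
            + (1 - t) * maximal_minor (specialize M (y(v := 0))) S"
      if "S \<in> col_subsets n k" "v \<in> P" for S y v and t :: 'a
      using that maximal_minor_specialize_affine[OF M] by (auto simp: P_def)
    show "card {S\<in>col_subsets n k. critical_at (\<lambda>y. maximal_minor (specialize M y) S) v}
          < card (UNIV :: 'a set) - 1" if "v \<in> P" for v
    proof -
      obtain i0 j0 where v: "v = (i0, j0)" "i0 < k" "j0 < n" "M $$ (i0, j0) \<noteq> 0"
        using \<open>v \<in> P\<close> by (auto simp: P_def)
      have "{j. j < n \<and> M $$ (i0, j) = 0} = {..<n} - {j. j < n \<and> M $$ (i0, j) = 1}"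
        using binary v(2) by auto
      then have zeros: "card {j. j < n \<and> M $$ (i0, j) = 0} = k - 1"
        using row_wt v(2) k by (simp add: card_Diff_subset subset_eq)
      have "(n - 1) choose (k - 1) \<ge> 1"
        using zero_less_binomial[of "k - 1" "n - 1"] k by linarith
      then show ?thesis
        unfolding v(1) using q
        by (intro le_less_trans[OF card_critical_col_subsets[OF M k(1) v(2-4) zeros]]) linarith
    qed
    show "maximal_minor (specialize M y) S = maximal_minor (specialize M y') S"
      if "S \<in> col_subsets n k" "\<And>v. v \<in> P \<Longrightarrow> y v = y' v" for S and y y' :: "nat \<times> nat \<Rightarrow> 'a"
      using that by (intro maximal_minor_specialize_cong[OF M]) (auto simp: P_def col_subsets_def)
  qed (use finite_col_subsets realizable in auto)
  then show ?thesis
    by (auto simp: P_def)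
qed

lemma hamming_wt_row_specialize:
  assumes "M \<in> carrier_mat k n" "i < k" "\<forall>j<n. M $$ (i, j) \<in> {0, 1}"
    and "\<forall>j<n. M $$ (i, j) \<noteq> 0 \<longrightarrow> c (i, j) \<noteq> 0"
  shows "hamming_wt (row (specialize M c) i) = card {j. j < n \<and> M $$ (i, j) = 1}"
  unfolding hamming_wt_def
  using assms by (intro arg_cong[of _ _ card]) (fastforce simp: specialize_def)

lemma mds_generator_imp_f_prod_V_mat_nonzero:
  fixes G :: "'a::{field,finite} mat"
  assumes mds: "mds_generator n k G" and "k \<le> n"
  shows "f_prod (V_mat (support_mat G) :: 'a mpoly mat) \<noteq> 0"
proof -
  have G: "G \<in> carrier_mat k n"
    using mds by (simp add: mds_generator_def)
  have "mpoly_eval (($$) G) (f_prod (V_mat (support_mat G) :: 'a mpoly mat)) = f_prod G"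
    unfolding mpoly_eval_hom.hom_f_prod V_mat_eq_specialize mpoly_eval_hom.map_mat_specialize
    by (simp add: comp_def mpoly_eval_Var specialize_support_mat)
  also have "\<dots> \<noteq> 0"
    unfolding f_prod_eq_prod_maximal_minors[OF G]
    using mds_generator_imp_maximal_minors_nonzero[OF mds assms(2)] finite_col_subsets by simp
  finally show ?thesis
    by (metis mpoly_eval_zero)
qed

lemma exists_mds_generator_with_support:
  fixes M :: "nat mat"
  assumes k: "1 \<le> k" "k \<le> n" and M: "M \<in> carrier_mat k n"
    and binary: "\<forall>i<k. \<forall>j<n. M $$ (i, j) \<in> {0, 1}"
    and row_wt: "\<forall>i<k. card {j. j < n \<and> M $$ (i, j) = 1} = n - k + 1"
    and q: "card (UNIV :: 'a::{finite,field} set) > (n - 1) choose (k - 1)"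
    and f: "f_prod (V_mat M :: 'a mpoly mat) \<noteq> 0"
  shows "\<exists>G :: 'a mat. mds_generator n k G \<and> support_mat G = M"
proof -
  have "\<exists>y :: nat \<times> nat \<Rightarrow> 'a. maximal_minor (specialize M y) S \<noteq> 0"
    if "S \<in> col_subsets n k" for S
  proof (rule maximal_minor_specialize_transversal[OF M that])
    show "maximal_minor (V_mat M :: 'a mpoly mat) S \<noteq> 0"
      using f that finite_col_subsets unfolding f_prod_eq_prod_maximal_minors[OF V_mat_carrier[OF M]]
      by (auto dest: prod_zero)
  qed
  then obtain c :: "nat \<times> nat \<Rightarrow> 'a"
    where c: "\<forall>i<k. \<forall>j<n. M $$ (i, j) \<noteq> 0 \<longrightarrow> c (i, j) \<noteq> 0"
      and minors: "\<forall>S\<in>col_subsets n k. maximal_minor (specialize M c) S \<noteq> 0"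
    using exists_specialization_with_nonzero_minors[OF k M binary row_wt q] by blast
  have "0 < k"
    using k(1) by simp
  have "hamming_wt (row (specialize M c) 0) = card {j. j < n \<and> M $$ (0, j) = 1}"
    by (rule hamming_wt_row_specialize[OF M \<open>0 < k\<close>]) (use binary c \<open>0 < k\<close> in auto)
  also have "\<dots> = n - k + 1"
    using row_wt \<open>0 < k\<close> by simp
  finally have "mds_generator n k (specialize M c)"
    by (rule maximal_minors_nonzero_imp_mds_generator[OF specialize_carrier[OF M] k(2) minors \<open>0 < k\<close>])
  moreover have "support_mat (specialize M c) = M"
    using M binary c by (intro support_mat_specialize) auto
  ultimately show ?thesis
    by blast
qed

theorem lemma1:
  fixes n k :: nat and M :: "nat mat"
  assumes "1 \<le> k" "k \<le> n"
    and "card (UNIV :: 'a::{finite,field} set) > (n - 1) choose (k - 1)"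
    and "M \<in> carrier_mat k n"
    and "\<forall>i<k. \<forall>j<n. M $$ (i,j) \<in> {0,1}"
    and "\<forall>i<k. card {j. j < n \<and> M $$ (i,j) = 1} = n - k + 1"
  shows "(\<exists>G :: 'a mat. mds_generator n k G \<and> support_mat G = M)
         \<longleftrightarrow> f_prod (V_mat M :: 'a mpoly mat) \<noteq> 0"
proof
  assume "\<exists>G :: 'a mat. mds_generator n k G \<and> support_mat G = M"
  then show "f_prod (V_mat M :: 'a mpoly mat) \<noteq> 0"
    using mds_generator_imp_f_prod_V_mat_nonzero assms(2) by blast
next
  assume "f_prod (V_mat M :: 'a mpoly mat) \<noteq> 0"
  then show "\<exists>G :: 'a mat. mds_generator n k G \<and> support_mat G = M"
    by (rule exists_mds_generator_with_support[OF assms(1,2,4,5,6,3)])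
qed

end
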